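(* Let $M\subset\mathbb{R}^2$ be open with coordinates $(x,u)$, let $M^{(1)}$ be the first-order jet space with coordinates $(x,u,u_x)$, and consider the ODE $u_{xx}=\phi(x,u,u_x)$ with associated vector field $\mathbf{A}=\partial_x+u_x\partial_u+\phi\,\partial_{u_x}$. Let $(\partial_u,\lambda_1)$ and $(\partial_u,\lambda_2)$ be the canonical representatives of two non-equivalent generalized $\mathcal{C}^\infty$-symmetries of this ODE. Let $\mathbf{X}_i=\partial_u+\lambda_i\partial_{u_x}$, $\rho=\dfrac{\mathbf{X}_1(\lambda_2)-\mathbf{X}_2(\lambda_1)}{\lambda_1-\lambda_2}$, let $f_1,f_2\in C^\infty(M^{(1)})$ satisfy $\dfrac{\mathbf{X}_1(f_2)}{f_2}=\dfrac{\mathbf{X}_2(f_1)}{f_1}=\rho$, let $\mathbf{Y}_i=f_i\mathbf{X}_i$, $\rho_i=\lambda_i-\mathbf{A}(f_i)/f_i$, and let $g_1,g_2\in C^\infty(M^{(1)})$ satisfy $\mathbf{A}(g_1)=\rho_1g_1$, $\mathbf{Y}_2(g_1)=0$, $\mathbf{A}(g_2)=\rho_2g_2$, $\mathbf{Y}_1(g_2)=0$. Then: (1) The functions $$\mu_1=\frac{1}{f_2g_2(\lambda_2-\lambda_1)},\qquad \mu_2=\frac{1}{f_1g_1(\lambda_1-\lambda_2)}$$ are integrating factors of the ODE; a first integral $I_1$ (resp. $I_2$) of $\mathbf{A}$ associated to $(\partial_u,\lambda_1)$ (resp. $(\partial_u,\lambda_2)$) can be obtained by quadratures from $(I_1)_x=\mu_1(\lambda_1u_x-\phi)$,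 $(I_1)_u=-\lambda_1\mu_1$, $(I_1)_{u_x}=\mu_1$ (resp. $(I_2)_x=\mu_2(\lambda_2u_x-\phi)$, $(I_2)_u=-\lambda_2\mu_2$, $(I_2)_{u_x}=\mu_2$). (2) The function $$M=\frac{1}{f_1g_1f_2g_2(\lambda_2-\lambda_1)}$$ is a Jacobi last multiplier of the ODE.
   Context: All functions are smooth on $M^{(1)}$ and all statements are local, on an open set where $\lambda_1-\lambda_2$, $f_1,f_2,g_1,g_2$ do not vanish. For smooth $\xi,\eta,\lambda$ on $M^{(1)}$ and $\mathbf{v}=\xi\partial_x+\eta\partial_u$, the $\lambda$-prolongation is $\mathbf{v}^{[\lambda,(1)]}=\mathbf{v}+\big((\mathbf{A}+\lambda)(\eta)-(\mathbf{A}+\lambda)(\xi)u_x\big)\partial_{u_x}$. The pair $(\mathbf{v},\lambda)$ is a generalized $\mathcal{C}^\infty$-symmetry of the ODE if $[\mathbf{v}^{[\lambda,(1)]},\mathbf{A}]=\lambda\,\mathbf{v}^{[\lambda,(1)]}-(\mathbf{A}+\lambda)(\xi)\,\mathbf{A}$. A first integral of $\mathbf{A}$ associated to $(\mathbf{v},\lambda)$ is a function $I$ with $\mathbf{A}(I)=\mathbf{v}^{[\lambda,(1)]}(I)=0$. Two generalized $\mathcal{C}^\infty$-symmetries are $\mathbf{A}$-equivalent if $\{\mathbf{A},\mathbf{v}_1^{[\lambda_1,(1)]},\mathbf{v}_2^{[\lambda_2,(1)]}\}$ is linearly dependent over $C^\infty(M^{(1)})$; if $Q=\eta-\xi u_x$,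 the canonical representative of the class of $(\mathbf{v},\lambda)$ is $(\partial_u,\lambda+\mathbf{A}(Q)/Q)$. An integrating factor of the ODE is a function $\mu(x,u,u_x)$ such that $\mu\,(u_{xx}-\phi)=\mathbf{D}_x(I)$ for some function $I(x,u,u_x)$, where $\mathbf{D}_x=\partial_x+u_x\partial_u+u_{xx}\partial_{u_x}+\cdots$ is the total derivative. A Jacobi last multiplier of the ODE is a function $M(x,u,u_x)$ with $\mathbf{A}(M)+M\,\phi_{u_x}=0$. *)

theory Defs
  imports "HOL-Analysis.Analysis"
begin

text \<open>Functions on (an open subset of) the first-order jet space with coordinates
  (x,u,p), p standing for u_x, are represented curried.\<close>
type_synonym jfun = "real \<Rightarrow> real \<Rightarrow> real \<Rightarrow> real"

text \<open>A vector field a d/dx + b d/du + c d/dp as the triple of its components.\<close>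
type_synonym jvf = "jfun \<times> jfun \<times> jfun"

definition pdx :: "jfun \<Rightarrow> jfun" where
  "pdx F = (\<lambda>x u p. deriv (\<lambda>t. F t u p) x)"
definition pdu :: "jfun \<Rightarrow> jfun" where
  "pdu F = (\<lambda>x u p. deriv (\<lambda>t. F x t p) u)"
definition pdp :: "jfun \<Rightarrow> jfun" where
  "pdp F = (\<lambda>x u p. deriv (\<lambda>t. F x u t) p)"

fun iter_pd :: "nat list \<Rightarrow> jfun \<Rightarrow> jfun" where
  "iter_pd [] F = F"
| "iter_pd (d # ds) F =
     (if d = 0 then pdx (iter_pd ds F) else if d = 1 then pdu (iter_pd ds F)
      else pdp (iter_pd ds F))"

definition smooth_on :: "(real \<times> real \<times> real) set \<Rightarrow> jfun \<Rightarrow> bool" where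
  "smooth_on U F \<longleftrightarrow> (\<forall>ds. \<forall>z\<in>U.
      (\<lambda>(x,u,p). iter_pd ds F x u p) differentiable (at z))"

definition vf_apply :: "jvf \<Rightarrow> jfun \<Rightarrow> jfun" where
  "vf_apply V F = (case V of (a,b,c) \<Rightarrow>
      (\<lambda>x u p. a x u p * pdx F x u p + b x u p * pdu F x u p + c x u p * pdp F x u p))"

definition lie_bracket :: "jvf \<Rightarrow> jvf \<Rightarrow> jvf" where
  "lie_bracket V W = (case V of (a,b,c) \<Rightarrow> case W of (a',b',c') \<Rightarrow>
      (\<lambda>x u p. vf_apply V a' x u p - vf_apply W a x u p,
       \<lambda>x u p. vf_apply V b' x u p - vf_apply W b x u p,
       \<lambda>x u p. vf_apply V c' x u p - vf_apply W c x u p))"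

definition vf_eq_on :: "(real \<times> real \<times> real) set \<Rightarrow> jvf \<Rightarrow> jvf \<Rightarrow> bool" where
  "vf_eq_on U V W \<longleftrightarrow> (\<forall>(x,u,p)\<in>U.
      fst V x u p = fst W x u p \<and> fst (snd V) x u p = fst (snd W) x u p \<and>
      snd (snd V) x u p = snd (snd W) x u p)"

definition Avf :: "jfun \<Rightarrow> jvf" where
  "Avf phi = ((\<lambda>x u p. 1), (\<lambda>x u p. p), phi)"

definition Aplus :: "jfun \<Rightarrow> jfun \<Rightarrow> jfun \<Rightarrow> jfun" where
  "Aplus phi lam h = (\<lambda>x u p. vf_apply (Avf phi) h x u p + lam x u p * h x u p)"

definition lam_prol :: "jfun \<Rightarrow> jfun \<Rightarrow> jfun \<Rightarrow> jfun \<Rightarrow> jvf" where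
  "lam_prol phi xi eta lam = (xi, eta,
      (\<lambda>x u p. Aplus phi lam eta x u p - Aplus phi lam xi x u p * p))"

definition gen_Cinf_symmetry ::
  "(real \<times> real \<times> real) set \<Rightarrow> jfun \<Rightarrow> jfun \<Rightarrow> jfun \<Rightarrow> jfun \<Rightarrow> bool" where
  "gen_Cinf_symmetry U phi xi eta lam \<longleftrightarrow>
     smooth_on U xi \<and> smooth_on U eta \<and> smooth_on U lam \<and>
     vf_eq_on U (lie_bracket (lam_prol phi xi eta lam) (Avf phi))
       (let V = lam_prol phi xi eta lam; k = Aplus phi lam xi; A = Avf phi in
        (\<lambda>x u p. lam x u p * fst V x u p - k x u p * fst A x u p,
         \<lambda>x u p. lam x u p * fst (snd V) x u p - k x u p * fst (snd A) x u p,
         \<lambda>x u p. lam x u p * snd (snd V) x u p - k x u p * snd (snd A) x u p))"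

definition lin_dep_Cinf :: "(real \<times> real \<times> real) set \<Rightarrow> jvf \<Rightarrow> jvf \<Rightarrow> jvf \<Rightarrow> bool" where
  "lin_dep_Cinf U V1 V2 V3 \<longleftrightarrow> (\<exists>a b c. smooth_on U a \<and> smooth_on U b \<and> smooth_on U c \<and>
      (\<exists>(x,u,p)\<in>U. a x u p \<noteq> 0 \<or> b x u p \<noteq> 0 \<or> c x u p \<noteq> 0) \<and>
      (\<forall>(x,u,p)\<in>U.
         a x u p * fst V1 x u p + b x u p * fst V2 x u p + c x u p * fst V3 x u p = 0 \<and>
         a x u p * fst (snd V1) x u p + b x u p * fst (snd V2) x u p
           + c x u p * fst (snd V3) x u p = 0 \<and>
         a x u p * snd (snd V1) x u p + b x u p * snd (snd V2) x u p
           + c x u p * snd (snd V3) x u p = 0))"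

definition A_equivalent ::
  "(real \<times> real \<times> real) set \<Rightarrow> jfun \<Rightarrow> jfun \<Rightarrow> jfun \<Rightarrow> jfun \<Rightarrow> jfun \<Rightarrow> jfun \<Rightarrow> jfun \<Rightarrow> bool" where
  "A_equivalent U phi xi1 eta1 lam1 xi2 eta2 lam2 \<longleftrightarrow>
     lin_dep_Cinf U (Avf phi) (lam_prol phi xi1 eta1 lam1) (lam_prol phi xi2 eta2 lam2)"

definition first_integral_assoc ::
  "(real \<times> real \<times> real) set \<Rightarrow> jfun \<Rightarrow> jfun \<Rightarrow> jfun \<Rightarrow> jfun \<Rightarrow> jfun \<Rightarrow> bool" where
  "first_integral_assoc V phi xi eta lam I \<longleftrightarrow>
     (\<forall>(x,u,p)\<in>V. vf_apply (Avf phi) I x u p = 0 \<and>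
                   vf_apply (lam_prol phi xi eta lam) I x u p = 0)"

text \<open>mu (u_xx - phi) = D_x(I), with u_xx =: q a free jet coordinate;
  D_x I = I_x + p I_u + q I_p.\<close>
definition integrating_factor_on :: "(real \<times> real \<times> real) set \<Rightarrow> jfun \<Rightarrow> jfun \<Rightarrow> bool" where
  "integrating_factor_on V phi mu \<longleftrightarrow> (\<exists>I. smooth_on V I \<and>
     (\<forall>(x,u,p)\<in>V. \<forall>q. mu x u p * (q - phi x u p)
         = pdx I x u p + p * pdu I x u p + q * pdp I x u p))"

definition jacobi_last_multiplier :: "(real \<times> real \<times> real) set \<Rightarrow> jfun \<Rightarrow> jfun \<Rightarrow> bool" where
  "jacobi_last_multiplier V phi M \<longleftrightarrow>
     (\<forall>(x,u,p)\<in>V. vf_apply (Avf phi) M x u p + M x u p * pdp phi x u p = 0)"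

end

theory Submission
  imports Defs
begin

text \<open>
  For the canonical representative \<open>(\<partial>\<^sub>u, \<lambda>)\<close> the symmetry condition says exactly that
  \<open>\<lambda>\<close> solves the Riccati-type equation \<open>A(\<lambda>) = \<phi>\<^sub>u + \<lambda> \<phi>\<^sub>p - \<lambda>\<^sup>2\<close> (writing \<open>p\<close> for \<open>u\<^sub>x\<close>).
  The 1-form \<open>\<omega> = \<mu>(\<lambda>p - \<phi>) dx - \<lambda>\<mu> du + \<mu> dp\<close> annihilates \<open>A\<close> and
  \<open>X = \<partial>\<^sub>u + \<lambda>\<partial>\<^sub>p\<close>, and by the Riccati equation it is closed as soon as
  \<open>X(\<mu>) = -\<lambda>\<^sub>p \<mu>\<close> and \<open>A(\<mu>) = (\<lambda> - \<phi>\<^sub>p) \<mu>\<close>.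
  For \<open>\<mu>\<^sub>1 = 1/h\<close> with \<open>h = f\<^sub>2 g\<^sub>2 (\<lambda>\<^sub>2 - \<lambda>\<^sub>1)\<close> these become statements about logarithmic
  derivatives: the hypotheses on \<open>f\<^sub>2, g\<^sub>2\<close> give \<open>X\<^sub>1(h) = (\<lambda>\<^sub>1)\<^sub>p h\<close> and
  \<open>A(h) = (\<phi>\<^sub>p - \<lambda>\<^sub>1) h\<close>. The Poincar\'e lemma on a small box then gives \<open>I\<^sub>1\<close> with
  \<open>dI\<^sub>1 = \<omega>\<close>; it is a first integral, and \<open>\<mu>\<^sub>1\<close> is an integrating factor.
  In the same way \<open>A(h) = \<phi>\<^sub>p h\<close> for \<open>h = f\<^sub>1 g\<^sub>1 f\<^sub>2 g\<^sub>2 (\<lambda>\<^sub>2 - \<lambda>\<^sub>1)\<close>, which is the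
  last-multiplier equation \<open>A(M) + \<phi>\<^sub>p M = 0\<close> for \<open>M = 1/h\<close>.
\<close>

section \<open>Partial derivatives of functions on the jet space\<close>

definition jdifferentiable :: "jfun \<Rightarrow> real \<Rightarrow> real \<Rightarrow> real \<Rightarrow> bool" where
  "jdifferentiable F x u p \<longleftrightarrow> (\<lambda>(x,u,p). F x u p) differentiable (at (x,u,p))"

lemma jdifferentiable_const [simp]: "jdifferentiable (\<lambda>x u p. c) x u p"
  unfolding jdifferentiable_def case_prod_unfold by simp

lemma jdifferentiable_coordinate_p [simp]: "jdifferentiable (\<lambda>x u p. p) x u p"
  unfolding jdifferentiable_def case_prod_unfold
  by (intro bounded_linear_imp_differentiable bounded_linear_compose[OF bounded_linear_snd bounded_linear_snd])

lemma jdifferentiable_add [simp]: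
  "jdifferentiable F x u p \<Longrightarrow> jdifferentiable G x u p \<Longrightarrow>
   jdifferentiable (\<lambda>x u p. F x u p + G x u p) x u p"
  unfolding jdifferentiable_def case_prod_unfold by (rule differentiable_add)

lemma jdifferentiable_diff [simp]:
  "jdifferentiable F x u p \<Longrightarrow> jdifferentiable G x u p \<Longrightarrow>
   jdifferentiable (\<lambda>x u p. F x u p - G x u p) x u p"
  unfolding jdifferentiable_def case_prod_unfold by (rule differentiable_diff)

lemma jdifferentiable_minus [simp]:
  "jdifferentiable F x u p \<Longrightarrow> jdifferentiable (\<lambda>x u p. - F x u p) x u p"
  unfolding jdifferentiable_def case_prod_unfold by (rule differentiable_minus)

lemma jdifferentiable_mult [simp]:
  "jdifferentiable F x u p \<Longrightarrow> jdifferentiable G x u p \<Longrightarrow>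
   jdifferentiable (\<lambda>x u p. F x u p * G x u p) x u p"
  unfolding jdifferentiable_def case_prod_unfold by (rule differentiable_mult)

lemma jdifferentiable_divide [simp]:
  "jdifferentiable F x u p \<Longrightarrow> jdifferentiable G x u p \<Longrightarrow> G x u p \<noteq> 0 \<Longrightarrow>
   jdifferentiable (\<lambda>x u p. F x u p / G x u p) x u p"
  unfolding jdifferentiable_def case_prod_unfold by (intro differentiable_divide) auto

lemma has_real_derivative_pdx:
  assumes "jdifferentiable F x u p"
  shows "((\<lambda>t. F t u p) has_real_derivative pdx F x u p) (at x)"
proof -
  have "(\<lambda>t. F t u p) = (\<lambda>(x,u,p). F x u p) \<circ> (\<lambda>t. (t,u,p))" by auto
  moreover have "(\<lambda>t. (t,u,p)) differentiable (at x)" by (intro derivative_intros)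
  ultimately have "(\<lambda>t. F t u p) differentiable (at x)"
    using assms unfolding jdifferentiable_def by (metis differentiable_chain_at)
  then show ?thesis unfolding pdx_def by (simp add: DERIV_deriv_iff_real_differentiable)
qed

lemma has_real_derivative_pdu:
  assumes "jdifferentiable F x u p"
  shows "((\<lambda>t. F x t p) has_real_derivative pdu F x u p) (at u)"
proof -
  have "(\<lambda>t. F x t p) = (\<lambda>(x,u,p). F x u p) \<circ> (\<lambda>t. (x,t,p))" by auto
  moreover have "(\<lambda>t. (x,t,p)) differentiable (at u)" by (intro derivative_intros)
  ultimately have "(\<lambda>t. F x t p) differentiable (at u)"
    using assms unfolding jdifferentiable_def by (metis differentiable_chain_at)
  then show ?thesis unfolding pdu_def by (simp add: DERIV_deriv_iff_real_differentiable)
qed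

lemma has_real_derivative_pdp:
  assumes "jdifferentiable F x u p"
  shows "((\<lambda>t. F x u t) has_real_derivative pdp F x u p) (at p)"
proof -
  have "(\<lambda>t. F x u t) = (\<lambda>(x,u,p). F x u p) \<circ> (\<lambda>t. (x,u,t))" by auto
  moreover have "(\<lambda>t. (x,u,t)) differentiable (at p)" by (intro derivative_intros)
  ultimately have "(\<lambda>t. F x u t) differentiable (at p)"
    using assms unfolding jdifferentiable_def by (metis differentiable_chain_at)
  then show ?thesis unfolding pdp_def by (simp add: DERIV_deriv_iff_real_differentiable)
qed

lemma pdx_eqI: "((\<lambda>t. F t u p) has_real_derivative D) (at x) \<Longrightarrow> pdx F x u p = D"
  unfolding pdx_def by (rule DERIV_imp_deriv)

lemma pdu_eqI: "((\<lambda>t. F x t p) has_real_derivative D) (at u) \<Longrightarrow> pdu F x u p = D"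
  unfolding pdu_def by (rule DERIV_imp_deriv)

lemma pdp_eqI: "((\<lambda>t. F x u t) has_real_derivative D) (at p) \<Longrightarrow> pdp F x u p = D"
  unfolding pdp_def by (rule DERIV_imp_deriv)

definition pd :: "nat \<Rightarrow> jfun \<Rightarrow> jfun" where
  "pd d = (if d = 0 then pdx else if d = 1 then pdu else pdp)"

lemma pd_0: "pd 0 = pdx" and pd_1: "pd 1 = pdu" and pd_2: "pd 2 = pdp"
  by (simp_all add: pd_def)

lemma iter_pd_Cons_pd: "iter_pd (d # ds) F = pd d (iter_pd ds F)"
  by (simp add: pd_def)

lemma iter_pd_append_single: "iter_pd (ds @ [d]) F = iter_pd ds (pd d F)"
  by (induction ds) (simp_all add: pd_def)

lemmas has_real_derivative_pd = has_real_derivative_pdx has_real_derivative_pdu has_real_derivative_pdp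

lemma pd_const [simp]: "pd d (\<lambda>x u p. c) x u p = 0"
  unfolding pd_def by (auto intro!: pdx_eqI pdu_eqI pdp_eqI)

lemma pd_coordinate_p: "pd d (\<lambda>x u p. p) x u p = (if d = 0 \<or> d = 1 then 0 else 1)"
  unfolding pd_def by (auto intro!: pdx_eqI pdu_eqI pdp_eqI derivative_eq_intros)

lemma pd_add [simp]:
  "jdifferentiable F x u p \<Longrightarrow> jdifferentiable G x u p \<Longrightarrow>
   pd d (\<lambda>x u p. F x u p + G x u p) x u p = pd d F x u p + pd d G x u p"
  unfolding pd_def
  by (auto intro!: pdx_eqI pdu_eqI pdp_eqI derivative_eq_intros has_real_derivative_pd)

lemma pd_diff [simp]:
  "jdifferentiable F x u p \<Longrightarrow> jdifferentiable G x u p \<Longrightarrow>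
   pd d (\<lambda>x u p. F x u p - G x u p) x u p = pd d F x u p - pd d G x u p"
  unfolding pd_def
  by (auto intro!: pdx_eqI pdu_eqI pdp_eqI derivative_eq_intros has_real_derivative_pd)

lemma pd_minus [simp]:
  "jdifferentiable F x u p \<Longrightarrow> pd d (\<lambda>x u p. - F x u p) x u p = - pd d F x u p"
  unfolding pd_def
  by (auto intro!: pdx_eqI pdu_eqI pdp_eqI derivative_eq_intros has_real_derivative_pd)

lemma pd_mult [simp]:
  "jdifferentiable F x u p \<Longrightarrow> jdifferentiable G x u p \<Longrightarrow>
   pd d (\<lambda>x u p. F x u p * G x u p) x u p = pd d F x u p * G x u p + F x u p * pd d G x u p"
  unfolding pd_def
  by (auto intro!: pdx_eqI pdu_eqI pdp_eqI derivative_eq_intros has_real_derivative_pd)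

lemma pd_divide [simp]:
  "jdifferentiable F x u p \<Longrightarrow> jdifferentiable G x u p \<Longrightarrow> G x u p \<noteq> 0 \<Longrightarrow>
   pd d (\<lambda>x u p. F x u p / G x u p) x u p
     = (pd d F x u p * G x u p - F x u p * pd d G x u p) / (G x u p * G x u p)"
  unfolding pd_def
  by (auto intro!: pdx_eqI pdu_eqI pdp_eqI derivative_eq_intros has_real_derivative_pd)

lemmas pd_rules = pd_const pd_coordinate_p pd_add pd_diff pd_minus pd_mult pd_divide
lemmas pdx_rules [simp] = pd_rules[where d=0, unfolded pd_0]
lemmas pdu_rules [simp] = pd_rules[where d=1, unfolded pd_1]
lemmas pdp_rules [simp] = pd_rules[where d=2, unfolded pd_2]

lemma eventually_in_open_along_line:
  fixes \<gamma> :: "real \<Rightarrow> real \<times> real \<times> real"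
  assumes "open V" "continuous_on UNIV \<gamma>" "\<gamma> t \<in> V"
  shows "eventually (\<lambda>s. \<gamma> s \<in> V) (nhds t)"
  using eventually_nhds_in_open[OF open_vimage[OF assms(1,2)]] assms(3) by simp

lemma pd_cong_open:
  assumes "open V" "(x,u,p) \<in> V" "\<And>x u p. (x,u,p) \<in> V \<Longrightarrow> F x u p = G x u p"
  shows "pd d F x u p = pd d G x u p"
proof -
  have "eventually (\<lambda>t. F t u p = G t u p) (nhds x)"
    by (rule eventually_mono[OF eventually_in_open_along_line[of V "\<lambda>t. (t,u,p)"]])
      (use assms in \<open>auto intro!: continuous_intros\<close>)
  moreover have "eventually (\<lambda>t. F x t p = G x t p) (nhds u)"
    by (rule eventually_mono[OF eventually_in_open_along_line[of V "\<lambda>t. (x,t,p)"]])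
      (use assms in \<open>auto intro!: continuous_intros\<close>)
  moreover have "eventually (\<lambda>t. F x u t = G x u t) (nhds p)"
    by (rule eventually_mono[OF eventually_in_open_along_line[of V "\<lambda>t. (x,u,t)"]])
      (use assms in \<open>auto intro!: continuous_intros\<close>)
  ultimately show ?thesis
    unfolding pd_def pdx_def pdu_def pdp_def by (auto intro: deriv_cong_ev)
qed

lemma iter_pd_cong_open:
  assumes "open V" "\<And>x u p. (x,u,p) \<in> V \<Longrightarrow> F x u p = G x u p" "(x,u,p) \<in> V"
  shows "iter_pd ds F x u p = iter_pd ds G x u p"
  using assms(3)
proof (induction ds arbitrary: x u p)
  case (Cons d ds)
  then show ?case unfolding iter_pd_Cons_pd by (intro pd_cong_open[OF assms(1)])
qed (use assms in simp)

lemma jdifferentiable_cong_open: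
  assumes "open V" "(x,u,p) \<in> V" "\<And>x u p. (x,u,p) \<in> V \<Longrightarrow> F x u p = G x u p"
    and "jdifferentiable F x u p"
  shows "jdifferentiable G x u p"
proof -
  obtain D where "((\<lambda>(x,u,p). F x u p) has_derivative D) (at (x,u,p))"
    using assms(4) unfolding jdifferentiable_def differentiable_def by blast
  then have "((\<lambda>(x,u,p). G x u p) has_derivative D) (at (x,u,p))"
    by (rule has_derivative_transform_within_open[OF _ assms(1,2)]) (use assms(3) in auto)
  then show ?thesis unfolding jdifferentiable_def differentiable_def by blast
qed

section \<open>Smooth functions\<close>

definition smooth_upto :: "nat \<Rightarrow> (real \<times> real \<times> real) set \<Rightarrow> jfun \<Rightarrow> bool" where
  "smooth_upto n U F \<longleftrightarrow>
     (\<forall>ds. length ds \<le> n \<longrightarrow> (\<forall>(x,u,p)\<in>U. jdifferentiable (iter_pd ds F) x u p))"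

lemma smooth_on_iff_smooth_upto: "smooth_on U F \<longleftrightarrow> (\<forall>n. smooth_upto n U F)"
  unfolding smooth_on_def smooth_upto_def jdifferentiable_def by fastforce

lemma smooth_upto_0: "smooth_upto 0 U F \<longleftrightarrow> (\<forall>(x,u,p)\<in>U. jdifferentiable F x u p)"
  unfolding smooth_upto_def by auto

lemma smooth_upto_Suc:
  "smooth_upto (Suc n) U F \<longleftrightarrow>
     (\<forall>(x,u,p)\<in>U. jdifferentiable F x u p) \<and> (\<forall>d. smooth_upto n U (pd d F))"
proof
  assume F: "smooth_upto (Suc n) U F"
  have "smooth_upto n U (pd d F)" for d
    unfolding smooth_upto_def
    using F[unfolded smooth_upto_def, rule_format, of "_ @ [d]"] by (simp add: iter_pd_append_single)
  then show "(\<forall>(x,u,p)\<in>U. jdifferentiable F x u p) \<and> (\<forall>d. smooth_upto n U (pd d F))"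
    using F[unfolded smooth_upto_def, rule_format, of "[]"] by auto
next
  assume F: "(\<forall>(x,u,p)\<in>U. jdifferentiable F x u p) \<and> (\<forall>d. smooth_upto n U (pd d F))"
  show "smooth_upto (Suc n) U F"
    unfolding smooth_upto_def
  proof (intro allI impI)
    fix ds :: "nat list"
    assume "length ds \<le> Suc n"
    then show "\<forall>(x,u,p)\<in>U. jdifferentiable (iter_pd ds F) x u p"
      using F by (cases ds rule: rev_exhaust) (auto simp: smooth_upto_def iter_pd_append_single)
  qed
qed

lemma smooth_upto_mono: "m \<le> n \<Longrightarrow> smooth_upto n U F \<Longrightarrow> smooth_upto m U F"
  unfolding smooth_upto_def by auto

lemma smooth_upto_jdifferentiable:
  assumes "smooth_upto n U F" "(x,u,p) \<in> U"
  shows "jdifferentiable F x u p"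
  using assms(1)[unfolded smooth_upto_def, rule_format, of "[]"] assms(2) by auto

lemma smooth_upto_0I:
  "(\<And>x u p. (x,u,p) \<in> U \<Longrightarrow> jdifferentiable F x u p) \<Longrightarrow> smooth_upto 0 U F"
  unfolding smooth_upto_0 by auto

lemma smooth_upto_SucI:
  "(\<And>x u p. (x,u,p) \<in> U \<Longrightarrow> jdifferentiable F x u p) \<Longrightarrow> (\<And>d. smooth_upto n U (pd d F))
   \<Longrightarrow> smooth_upto (Suc n) U F"
  unfolding smooth_upto_Suc by auto

lemma smooth_upto_SucD: "smooth_upto (Suc n) U F \<Longrightarrow> smooth_upto n U (pd d F)"
  unfolding smooth_upto_Suc by auto

lemma smooth_upto_cong_open:
  assumes "open U" "\<And>x u p. (x,u,p) \<in> U \<Longrightarrow> F x u p = G x u p" "smooth_upto n U F"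
  shows "smooth_upto n U G"
  unfolding smooth_upto_def
proof (intro allI impI ballI, clarify)
  fix ds :: "nat list" and x u p
  assume ds: "length ds \<le> n" and xup: "(x,u,p) \<in> U"
  have "\<And>x u p. (x,u,p) \<in> U \<Longrightarrow> iter_pd ds F x u p = iter_pd ds G x u p"
    by (rule iter_pd_cong_open[where F=F and G=G, OF assms(1,2)])
  moreover have "jdifferentiable (iter_pd ds F) x u p"
    using assms(3) ds xup unfolding smooth_upto_def by auto
  ultimately show "jdifferentiable (iter_pd ds G) x u p"
    by (rule jdifferentiable_cong_open[OF assms(1) xup])
qed

lemma smooth_upto_const: "open U \<Longrightarrow> smooth_upto n U (\<lambda>x u p. c)"
proof (induction n arbitrary: c)
  case (Suc n)
  then show ?case
    by (auto intro!: smooth_upto_SucI smooth_upto_cong_open[OF _ _ Suc.IH[of 0]])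
qed (simp add: smooth_upto_0)

lemma smooth_upto_coordinate_p: "open U \<Longrightarrow> smooth_upto n U (\<lambda>x u p. p)"
proof (induction n)
  case (Suc n)
  have "smooth_upto n U (pd d (\<lambda>x u p. p))" for d
    by (rule smooth_upto_cong_open[OF Suc.prems _ smooth_upto_const[OF Suc.prems]])
      (simp add: pd_coordinate_p)
  then show ?case by (intro smooth_upto_SucI) simp_all
qed (simp add: smooth_upto_0)

lemma smooth_upto_add:
  assumes "open U" "smooth_upto n U F" "smooth_upto n U G"
  shows "smooth_upto n U (\<lambda>x u p. F x u p + G x u p)"
  using assms(2,3)
proof (induction n arbitrary: F G)
  case 0
  then show ?case by (intro smooth_upto_0I) (simp add: smooth_upto_jdifferentiable)
next
  case (Suc n)
  note jd = Suc.prems[THEN smooth_upto_jdifferentiable]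
  show ?case
  proof (rule smooth_upto_SucI)
    show "jdifferentiable (\<lambda>x u p. F x u p + G x u p) x u p" if "(x,u,p) \<in> U" for x u p
      using jd that by simp
    have sum: "smooth_upto n U (\<lambda>x u p. pd d F x u p + pd d G x u p)" for d
      using Suc by (simp add: smooth_upto_SucD)
    show "smooth_upto n U (pd d (\<lambda>x u p. F x u p + G x u p))" for d
      by (rule smooth_upto_cong_open[OF assms(1) _ sum]) (simp add: jd)
  qed
qed

lemma smooth_upto_mult:
  assumes "open U" "smooth_upto n U F" "smooth_upto n U G"
  shows "smooth_upto n U (\<lambda>x u p. F x u p * G x u p)"
  using assms(2,3)
proof (induction n arbitrary: F G)
  case 0
  then show ?case by (intro smooth_upto_0I) (simp add: smooth_upto_jdifferentiable)
next
  case (Suc n)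
  note jd = Suc.prems[THEN smooth_upto_jdifferentiable]
  note lower = Suc.prems[THEN smooth_upto_mono[rotated], of n]
  show ?case
  proof (rule smooth_upto_SucI)
    show "jdifferentiable (\<lambda>x u p. F x u p * G x u p) x u p" if "(x,u,p) \<in> U" for x u p
      using jd that by simp
    have leibniz: "smooth_upto n U (\<lambda>x u p. pd d F x u p * G x u p + F x u p * pd d G x u p)" for d
      using Suc lower by (intro smooth_upto_add[OF assms(1)] Suc.IH) (simp_all add: smooth_upto_SucD)
    show "smooth_upto n U (pd d (\<lambda>x u p. F x u p * G x u p))" for d
      by (rule smooth_upto_cong_open[OF assms(1) _ leibniz]) (simp add: jd)
  qed
qed

lemma smooth_upto_minus:
  assumes "open U" "smooth_upto n U F"
  shows "smooth_upto n U (\<lambda>x u p. - F x u p)"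
  by (rule smooth_upto_cong_open[OF assms(1) _ smooth_upto_mult[OF assms(1) smooth_upto_const[of U n "-1"] assms(2)]])
    (simp_all add: assms(1))

lemma smooth_upto_diff:
  assumes "open U" "smooth_upto n U F" "smooth_upto n U G"
  shows "smooth_upto n U (\<lambda>x u p. F x u p - G x u p)"
  using smooth_upto_add[OF assms(1,2) smooth_upto_minus[OF assms(1,3)]] by simp

lemma smooth_upto_divide:
  assumes "open U" "smooth_upto n U F" "smooth_upto n U G" "\<forall>(x,u,p)\<in>U. G x u p \<noteq> 0"
  shows "smooth_upto n U (\<lambda>x u p. F x u p / G x u p)"
  using assms(2,3)
proof (induction n arbitrary: F)
  case 0
  then show ?case using assms(4) by (intro smooth_upto_0I) (auto simp: smooth_upto_jdifferentiable)
next
  case (Suc n)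
  note jd = Suc.prems[THEN smooth_upto_jdifferentiable]
  note lower = Suc.prems[THEN smooth_upto_mono[rotated], of n]
  show ?case
  proof (rule smooth_upto_SucI)
    show "jdifferentiable (\<lambda>x u p. F x u p / G x u p) x u p" if "(x,u,p) \<in> U" for x u p
      using jd that assms(4) by auto
    have quotient: "smooth_upto n U (\<lambda>x u p. (pd d F x u p - F x u p / G x u p * pd d G x u p) / G x u p)"
      for d
      using Suc.prems lower
      by (intro Suc.IH smooth_upto_diff smooth_upto_mult assms(1)) (simp_all add: smooth_upto_SucD)
    show "smooth_upto n U (pd d (\<lambda>x u p. F x u p / G x u p))" for d
      by (rule smooth_upto_cong_open[OF assms(1) _ quotient]) (use jd assms(4) in \<open>auto simp: field_simps\<close>)
  qed
qed

lemma smooth_on_const: "open U \<Longrightarrow> smooth_on U (\<lambda>x u p. c)"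
  by (simp add: smooth_on_iff_smooth_upto smooth_upto_const)

lemma smooth_on_coordinate_p: "open U \<Longrightarrow> smooth_on U (\<lambda>x u p. p)"
  by (simp add: smooth_on_iff_smooth_upto smooth_upto_coordinate_p)

lemma smooth_on_minus: "open U \<Longrightarrow> smooth_on U F \<Longrightarrow> smooth_on U (\<lambda>x u p. - F x u p)"
  by (simp add: smooth_on_iff_smooth_upto smooth_upto_minus)

lemma smooth_on_diff:
  "open U \<Longrightarrow> smooth_on U F \<Longrightarrow> smooth_on U G \<Longrightarrow> smooth_on U (\<lambda>x u p. F x u p - G x u p)"
  by (simp add: smooth_on_iff_smooth_upto smooth_upto_diff)

lemma smooth_on_mult:
  "open U \<Longrightarrow> smooth_on U F \<Longrightarrow> smooth_on U G \<Longrightarrow> smooth_on U (\<lambda>x u p. F x u p * G x u p)"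
  by (simp add: smooth_on_iff_smooth_upto smooth_upto_mult)

lemma smooth_on_divide:
  "open U \<Longrightarrow> smooth_on U F \<Longrightarrow> smooth_on U G \<Longrightarrow> \<forall>(x,u,p)\<in>U. G x u p \<noteq> 0 \<Longrightarrow>
   smooth_on U (\<lambda>x u p. F x u p / G x u p)"
  by (simp add: smooth_on_iff_smooth_upto smooth_upto_divide)

lemma smooth_on_jdifferentiable: "smooth_on U F \<Longrightarrow> (x,u,p) \<in> U \<Longrightarrow> jdifferentiable F x u p"
  by (auto simp: smooth_on_iff_smooth_upto intro: smooth_upto_jdifferentiable)

lemma smooth_on_pd: "smooth_on U F \<Longrightarrow> smooth_on U (pd d F)"
  by (simp add: smooth_on_iff_smooth_upto smooth_upto_SucD)

lemma smooth_on_subset: "V \<subseteq> U \<Longrightarrow> smooth_on U F \<Longrightarrow> smooth_on V F"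
  unfolding smooth_on_def by (meson subsetD)

lemma smooth_on_cong_open:
  "open U \<Longrightarrow> (\<And>x u p. (x,u,p) \<in> U \<Longrightarrow> F x u p = G x u p) \<Longrightarrow> smooth_on U F \<Longrightarrow> smooth_on U G"
  using smooth_upto_cong_open[of U F G] by (simp add: smooth_on_iff_smooth_upto)

lemma smooth_onI:
  assumes "\<And>x u p. (x,u,p) \<in> U \<Longrightarrow> jdifferentiable F x u p"
    and "smooth_on U (pdx F)" "smooth_on U (pdu F)" "smooth_on U (pdp F)"
  shows "smooth_on U F"
proof -
  have "smooth_on U (pd d F)" for d
    using assms(2-4) by (simp add: pd_def)
  then have "smooth_upto n U F" for n
    using assms(1) by (cases n) (auto intro!: smooth_upto_0I smooth_upto_SucI simp: smooth_on_iff_smooth_upto)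
  then show ?thesis by (simp add: smooth_on_iff_smooth_upto)
qed

lemma continuous_on_smooth_on:
  assumes "smooth_on U F"
  shows "continuous_on U (\<lambda>(x,u,p). F x u p)"
proof (rule continuous_at_imp_continuous_on, clarify)
  fix x u p
  assume "(x,u,p) \<in> U"
  then have "jdifferentiable F x u p" by (rule smooth_on_jdifferentiable[OF assms])
  then show "isCont (\<lambda>(x,u,p). F x u p) (x,u,p)"
    unfolding jdifferentiable_def by (rule differentiable_imp_continuous_within)
qed

section \<open>Differentiability from continuous partial derivatives\<close>

lemma continuous_on_jfun_compose:
  assumes "continuous_on U (\<lambda>(x,u,p). F x u p)" "continuous_on S (\<lambda>s. (a s, b s, c s))"
    and "\<And>s. s \<in> S \<Longrightarrow> (a s, b s, c s) \<in> U"
  shows "continuous_on S (\<lambda>s. F (a s) (b s) (c s))"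
  using continuous_on_compose2[OF assms(1,2)] assms(3) by auto

lemma has_derivative_of_partials2:
  fixes G Gp :: "real \<Rightarrow> real \<Rightarrow> real"
  assumes "open Y" "open Z" "convex Z" "u \<in> Y" "p \<in> Z"
    and du: "((\<lambda>t. G t p) has_real_derivative Gu) (at u)"
    and dp: "\<And>u p. u \<in> Y \<Longrightarrow> p \<in> Z \<Longrightarrow> ((\<lambda>t. G u t) has_real_derivative Gp u p) (at p)"
    and cont: "continuous_on (Y \<times> Z) (\<lambda>(u,p). Gp u p)"
  shows "((\<lambda>(u,p). G u p) has_derivative (\<lambda>(hu,hp). Gu * hu + Gp u p * hp)) (at (u,p))"
proof -
  have mult_left: "(*) c = blinfun_apply (blinfun_mult_left c)" for c :: real
    by (auto simp: mult.commute)
  have "((\<lambda>t. G t p) has_derivative (*) Gu) (at u within Y)"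
    using du unfolding has_field_derivative_def by (rule has_derivative_at_withinI)
  moreover have "((\<lambda>t. G u' t) has_derivative blinfun_apply (blinfun_mult_left (Gp u' p'))) (at p' within Z)"
    if "u' \<in> Y" "p' \<in> Z" for u' p'
    using dp[OF that] unfolding has_field_derivative_def mult_left by (rule has_derivative_at_withinI)
  moreover have "continuous (at (u,p) within Y \<times> Z) (\<lambda>(u,p). blinfun_mult_left (Gp u p))"
    using bounded_linear.continuous[OF bounded_linear_blinfun_mult_left,
        of "at (u,p) within Y \<times> Z" "\<lambda>(u,p). Gp u p"] cont assms(4,5)
    by (simp add: continuous_on_eq_continuous_within case_prod_unfold)
  ultimately have "((\<lambda>(u,p). G u p) has_derivative
      (\<lambda>(hu,hp). Gu * hu + blinfun_apply (blinfun_mult_left (Gp u p)) hp)) (at (u,p) within Y \<times> Z)"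
    by (rule has_derivative_partialsI[OF _ _ _ assms(5,3)])
  moreover have "at (u,p) within Y \<times> Z = at (u,p)"
    using assms(1,2,4,5) by (intro at_within_open) (auto intro: open_Times)
  ultimately show ?thesis by (simp add: mult.commute)
qed

lemma jdifferentiable_of_continuous_partials:
  fixes F Fu Fp :: jfun
  assumes "open X" "open Y" "open Z" "convex Y" "convex Z" "x \<in> X" "u \<in> Y" "p \<in> Z"
    and dx: "((\<lambda>t. F t u p) has_real_derivative Fx) (at x)"
    and du: "\<And>x u p. x \<in> X \<Longrightarrow> u \<in> Y \<Longrightarrow> p \<in> Z \<Longrightarrow>
      ((\<lambda>t. F x t p) has_real_derivative Fu x u p) (at u)"
    and dp: "\<And>x u p. x \<in> X \<Longrightarrow> u \<in> Y \<Longrightarrow> p \<in> Z \<Longrightarrow>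
      ((\<lambda>t. F x u t) has_real_derivative Fp x u p) (at p)"
    and cu: "continuous_on (X \<times> Y \<times> Z) (\<lambda>(x,u,p). Fu x u p)"
    and cp: "continuous_on (X \<times> Y \<times> Z) (\<lambda>(x,u,p). Fp x u p)"
  shows "jdifferentiable F x u p"
proof -
  define B where "B x' y = (blinfun_mult_left (Fu x' (fst y) (snd y)) o\<^sub>L fst_blinfun)
    + (blinfun_mult_left (Fp x' (fst y) (snd y)) o\<^sub>L snd_blinfun)" for x' y
  have "((\<lambda>t. (\<lambda>(u,p). F t u p) (u,p)) has_derivative (*) Fx) (at x within X)"
    using dx unfolding has_field_derivative_def by (simp add: has_derivative_at_withinI)
  moreover have "((\<lambda>(u,p). F x' u p) has_derivative blinfun_apply (B x' y)) (at y within Y \<times> Z)"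
    if "x' \<in> X" "y \<in> Y \<times> Z" for x' y
  proof -
    obtain u' p' where y: "y = (u',p')" by (cases y)
    have "continuous_on (Y \<times> Z) (\<lambda>z. Fp x' (fst z) (snd z))"
      using that(1) by (intro continuous_on_jfun_compose[OF cp]) (auto intro!: continuous_intros)
    then have "((\<lambda>(u,p). F x' u p) has_derivative (\<lambda>(hu,hp). Fu x' u' p' * hu + Fp x' u' p' * hp)) (at (u',p'))"
      using that y assms(2-5) du dp
      by (intro has_derivative_of_partials2[where Y=Y and Z=Z]) (auto simp: case_prod_unfold)
    moreover have "blinfun_apply (B x' y) = (\<lambda>(hu,hp). Fu x' u' p' * hu + Fp x' u' p' * hp)"
      by (auto simp: B_def y blinfun.add_left mult.commute)
    ultimately show ?thesis by (simp add: y has_derivative_at_withinI)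
  qed
  moreover have "continuous (at (x,(u,p)) within X \<times> (Y \<times> Z)) (\<lambda>(x,y). B x y)"
  proof -
    have "continuous (at (x,(u,p)) within X \<times> (Y \<times> Z)) (\<lambda>(x,y). Fu x (fst y) (snd y))"
      and "continuous (at (x,(u,p)) within X \<times> (Y \<times> Z)) (\<lambda>(x,y). Fp x (fst y) (snd y))"
      using cu cp assms(6-8) by (auto simp: continuous_on_eq_continuous_within case_prod_unfold)
    then show ?thesis
      unfolding B_def case_prod_unfold
      by (intro continuous_add bounded_bilinear.continuous[OF bounded_bilinear_blinfun_compose]
          bounded_linear.continuous[OF bounded_linear_blinfun_mult_left] continuous_const)
        (simp_all add: case_prod_unfold)
  qed
  ultimately have "((\<lambda>(x,y). (\<lambda>(u,p). F x u p) y) has_derivative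
      (\<lambda>(tx,ty). Fx * tx + blinfun_apply (B x (u,p)) ty)) (at (x,(u,p)) within X \<times> (Y \<times> Z))"
    using assms(7,8,4,5) by (intro has_derivative_partialsI) (auto intro: convex_Times)
  moreover have "at (x,(u,p)) within X \<times> (Y \<times> Z) = at (x,(u,p))"
    using assms(1-3,6-8) by (intro at_within_open) (auto intro: open_Times)
  moreover have "(\<lambda>(x,y). (\<lambda>(u,p). F x u p) y) = (\<lambda>(x,u,p). F x u p)" by auto
  ultimately show ?thesis unfolding jdifferentiable_def differentiable_def by auto
qed

lemma has_real_derivative_integral_parametric:
  fixes G Gd :: "real \<Rightarrow> real \<Rightarrow> real"
  assumes "open S" "convex S" "y \<in> S"
    and "\<And>y t. y \<in> S \<Longrightarrow> t \<in> {a..b} \<Longrightarrow> ((\<lambda>y. G y t) has_real_derivative Gd y t) (at y)"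
    and "\<And>y. y \<in> S \<Longrightarrow> continuous_on {a..b} (G y)"
    and "continuous_on (S \<times> {a..b}) (\<lambda>(y,t). Gd y t)"
  shows "((\<lambda>y. integral {a..b} (G y)) has_real_derivative integral {a..b} (Gd y)) (at y)"
proof -
  have "((\<lambda>y. integral (cbox a b) (G y)) has_field_derivative integral (cbox a b) (Gd y)) (at y within S)"
    using assms(2-6)
    by (intro leibniz_rule_field_derivative) (auto intro: has_field_derivative_at_within integrable_continuous_real)
  then show ?thesis using at_within_open[OF assms(3,1)] by simp
qed

lemma integral_real_derivative:
  fixes f :: "real \<Rightarrow> real"
  assumes "a \<le> b" "\<And>t. t \<in> {a..b} \<Longrightarrow> (f has_real_derivative f' t) (at t)"
  shows "integral {a..b} f' = f b - f a"
  using assms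
  by (intro integral_unique fundamental_theorem_of_calculus)
    (auto simp: has_real_derivative_iff_has_vector_derivative intro: has_vector_derivative_at_within)

lemma has_real_derivative_integral_upper:
  fixes g :: "real \<Rightarrow> real"
  assumes "continuous_on {a..b} g" "a < t" "t < b"
  shows "((\<lambda>s. integral {a..s} g) has_real_derivative g t) (at t)"
  using integral_has_real_derivative[OF assms(1), of t] at_within_Icc_at[OF assms(2,3)] assms(2,3)
  by simp

section \<open>The Poincar\'e lemma\<close>

definition closed_form_on :: "(real \<times> real \<times> real) set \<Rightarrow> jfun \<Rightarrow> jfun \<Rightarrow> jfun \<Rightarrow> bool" where
  "closed_form_on U P Q R \<longleftrightarrow> (\<forall>(x,u,p)\<in>U.
     pdu P x u p = pdx Q x u p \<and> pdp P x u p = pdx R x u p \<and> pdp Q x u p = pdu R x u p)"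

definition potential_on :: "(real \<times> real \<times> real) set \<Rightarrow> jfun \<Rightarrow> jfun \<Rightarrow> jfun \<Rightarrow> jfun \<Rightarrow> bool" where
  "potential_on V I P Q R \<longleftrightarrow> smooth_on V I \<and>
     (\<forall>(x,u,p)\<in>V. pdx I x u p = P x u p \<and> pdu I x u p = Q x u p \<and> pdp I x u p = R x u p)"

lemma potential_on_subset: "potential_on U I P Q R \<Longrightarrow> V \<subseteq> U \<Longrightarrow> potential_on V I P Q R"
  unfolding potential_on_def using smooth_on_subset by blast

lemma smooth_on_pdx: "smooth_on U F \<Longrightarrow> smooth_on U (pdx F)"
  and smooth_on_pdu: "smooth_on U F \<Longrightarrow> smooth_on U (pdu F)"
  using smooth_on_pd[of U F 0] smooth_on_pd[of U F 1] by (simp_all add: pd_def)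

locale closed_form_box =
  fixes U :: "(real \<times> real \<times> real) set" and P Q R :: jfun and a1 b1 a2 b2 a3 b3 :: real
  assumes smooth_P: "smooth_on U P" and smooth_Q: "smooth_on U Q" and smooth_R: "smooth_on U R"
    and closed: "closed_form_on U P Q R"
    and box_subset: "{a1..b1} \<times> {a2..b2} \<times> {a3..b3} \<subseteq> U"
    and box_nonempty: "a2 \<le> b2" "a3 \<le> b3"
begin

text \<open>The line integral of \<open>P dx + Q du + R dp\<close> along the axis-parallel path
  \<open>(a1,a2,a3) \<rightarrow> (x,a2,a3) \<rightarrow> (x,u,a3) \<rightarrow> (x,u,p)\<close>.\<close>

definition potential :: jfun where
  "potential x u p = integral {a1..x} (\<lambda>r. P r a2 a3) + integral {a2..u} (\<lambda>s. Q x s a3)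
     + integral {a3..p} (\<lambda>t. R x u t)"

lemma in_U: "x \<in> {a1..b1} \<Longrightarrow> u \<in> {a2..b2} \<Longrightarrow> p \<in> {a3..b3} \<Longrightarrow> (x,u,p) \<in> U"
  using box_subset by auto

lemma continuous_on_box_compose:
  assumes "smooth_on U F" "continuous_on S (\<lambda>s. (a s, b s, c s))"
    and "\<And>s. s \<in> S \<Longrightarrow> a s \<in> {a1..b1} \<and> b s \<in> {a2..b2} \<and> c s \<in> {a3..b3}"
  shows "continuous_on S (\<lambda>s. F (a s) (b s) (c s))"
  using assms(3) by (intro continuous_on_jfun_compose[OF continuous_on_smooth_on[OF assms(1)] assms(2)] in_U) auto

lemma has_real_derivative_potential_p:
  assumes "x \<in> {a1..b1}" "u \<in> {a2..b2}" "p \<in> {a3<..<b3}"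
  shows "((\<lambda>t. potential x u t) has_real_derivative R x u p) (at p)"
proof -
  have "continuous_on {a3..b3} (\<lambda>t. R x u t)"
    using assms by (intro continuous_on_box_compose[OF smooth_R, of _ "\<lambda>t. x" "\<lambda>t. u" "\<lambda>t. t"])
      (auto intro!: continuous_intros)
  then have "((\<lambda>t. integral {a3..t} (\<lambda>t. R x u t)) has_real_derivative R x u p) (at p)"
    using assms(3) by (intro has_real_derivative_integral_upper) auto
  from DERIV_add[OF DERIV_const this] show ?thesis unfolding potential_def by simp
qed

lemma closedD:
  assumes "(x,u,p) \<in> U"
  shows "pdu P x u p = pdx Q x u p" "pdp P x u p = pdx R x u p" "pdp Q x u p = pdu R x u p"
  using closed assms unfolding closed_form_on_def by auto

lemma jdifferentiable_in_box:
  assumes "smooth_on U F" "x \<in> {a1..b1}" "u \<in> {a2..b2}" "p \<in> {a3..b3}"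
  shows "jdifferentiable F x u p"
  using assms by (intro smooth_on_jdifferentiable[OF assms(1)] in_U)

lemma has_real_derivative_integral_R_u:
  assumes "x \<in> {a1..b1}" "u \<in> {a2<..<b2}" "p \<in> {a3..b3}"
  shows "((\<lambda>s. integral {a3..p} (\<lambda>t. R x s t)) has_real_derivative Q x u p - Q x u a3) (at u)"
proof -
  have "((\<lambda>s. integral {a3..p} (\<lambda>t. R x s t)) has_real_derivative integral {a3..p} (\<lambda>t. pdu R x u t)) (at u)"
  proof (rule has_real_derivative_integral_parametric[where S="{a2<..<b2}"])
    show "((\<lambda>s. R x s t) has_real_derivative pdu R x s t) (at s)" if "s \<in> {a2<..<b2}" "t \<in> {a3..p}" for s t
      using assms that by (intro has_real_derivative_pdu jdifferentiable_in_box[OF smooth_R]) auto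
    show "continuous_on {a3..p} (\<lambda>t. R x s t)" if "s \<in> {a2<..<b2}" for s
      using assms that by (intro continuous_on_box_compose[OF smooth_R, of _ "\<lambda>t. x" "\<lambda>t. s" "\<lambda>t. t"])
        (auto intro!: continuous_intros)
    have "continuous_on ({a2<..<b2} \<times> {a3..p}) (\<lambda>z. pdu R x (fst z) (snd z))"
      using assms by (intro continuous_on_box_compose[OF smooth_on_pdu[OF smooth_R], of _ "\<lambda>z. x"])
        (auto intro!: continuous_intros)
    then show "continuous_on ({a2<..<b2} \<times> {a3..p}) (\<lambda>(s,t). pdu R x s t)"
      by (simp add: case_prod_unfold)
  qed (use assms in auto)
  moreover have "integral {a3..p} (\<lambda>t. pdu R x u t) = integral {a3..p} (\<lambda>t. pdp Q x u t)"
    using assms by (intro integral_cong closedD(3)[symmetric] in_U) auto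
  moreover have "\<dots> = Q x u p - Q x u a3"
    using assms by (intro integral_real_derivative has_real_derivative_pdp jdifferentiable_in_box[OF smooth_Q]) auto
  ultimately show ?thesis by simp
qed

lemma has_real_derivative_integral_R_x:
  assumes "x \<in> {a1<..<b1}" "u \<in> {a2..b2}" "p \<in> {a3..b3}"
  shows "((\<lambda>r. integral {a3..p} (\<lambda>t. R r u t)) has_real_derivative P x u p - P x u a3) (at x)"
proof -
  have "((\<lambda>r. integral {a3..p} (\<lambda>t. R r u t)) has_real_derivative integral {a3..p} (\<lambda>t. pdx R x u t)) (at x)"
  proof (rule has_real_derivative_integral_parametric[where S="{a1<..<b1}"])
    show "((\<lambda>r. R r u t) has_real_derivative pdx R r u t) (at r)" if "r \<in> {a1<..<b1}" "t \<in> {a3..p}" for r t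
      using assms that by (intro has_real_derivative_pdx jdifferentiable_in_box[OF smooth_R]) auto
    show "continuous_on {a3..p} (\<lambda>t. R r u t)" if "r \<in> {a1<..<b1}" for r
      using assms that by (intro continuous_on_box_compose[OF smooth_R, of _ "\<lambda>t. r" "\<lambda>t. u" "\<lambda>t. t"])
        (auto intro!: continuous_intros)
    have "continuous_on ({a1<..<b1} \<times> {a3..p}) (\<lambda>z. pdx R (fst z) u (snd z))"
      using assms by (intro continuous_on_box_compose[OF smooth_on_pdx[OF smooth_R], of _ fst "\<lambda>z. u"])
        (auto intro!: continuous_intros)
    then show "continuous_on ({a1<..<b1} \<times> {a3..p}) (\<lambda>(r,t). pdx R r u t)"
      by (simp add: case_prod_unfold)
  qed (use assms in auto)
  moreover have "integral {a3..p} (\<lambda>t. pdx R x u t) = integral {a3..p} (\<lambda>t. pdp P x u t)"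
    using assms by (intro integral_cong closedD(2)[symmetric] in_U) auto
  moreover have "\<dots> = P x u p - P x u a3"
    using assms by (intro integral_real_derivative has_real_derivative_pdp jdifferentiable_in_box[OF smooth_P]) auto
  ultimately show ?thesis by simp
qed

lemma has_real_derivative_integral_Q_x:
  assumes "x \<in> {a1<..<b1}" "u \<in> {a2..b2}"
  shows "((\<lambda>r. integral {a2..u} (\<lambda>s. Q r s a3)) has_real_derivative P x u a3 - P x a2 a3) (at x)"
proof -
  have "((\<lambda>r. integral {a2..u} (\<lambda>s. Q r s a3)) has_real_derivative integral {a2..u} (\<lambda>s. pdx Q x s a3)) (at x)"
  proof (rule has_real_derivative_integral_parametric[where S="{a1<..<b1}"])
    show "((\<lambda>r. Q r s a3) has_real_derivative pdx Q r s a3) (at r)" if "r \<in> {a1<..<b1}" "s \<in> {a2..u}" for r s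
      using assms that box_nonempty(2) by (intro has_real_derivative_pdx jdifferentiable_in_box[OF smooth_Q]) auto
    show "continuous_on {a2..u} (\<lambda>s. Q r s a3)" if "r \<in> {a1<..<b1}" for r
      using assms that box_nonempty(2)
      by (intro continuous_on_box_compose[OF smooth_Q, of _ "\<lambda>s. r" "\<lambda>s. s" "\<lambda>s. a3"])
        (auto intro!: continuous_intros)
    have "continuous_on ({a1<..<b1} \<times> {a2..u}) (\<lambda>z. pdx Q (fst z) (snd z) a3)"
      using assms box_nonempty(2) by (intro continuous_on_box_compose[OF smooth_on_pdx[OF smooth_Q], of _ fst snd])
        (auto intro!: continuous_intros)
    then show "continuous_on ({a1<..<b1} \<times> {a2..u}) (\<lambda>(r,s). pdx Q r s a3)"
      by (simp add: case_prod_unfold)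
  qed (use assms in auto)
  moreover have "integral {a2..u} (\<lambda>s. pdx Q x s a3) = integral {a2..u} (\<lambda>s. pdu P x s a3)"
    using assms box_nonempty(2) by (intro integral_cong closedD(1)[symmetric] in_U) auto
  moreover have "\<dots> = P x u a3 - P x a2 a3"
    using assms box_nonempty(2)
    by (intro integral_real_derivative has_real_derivative_pdu jdifferentiable_in_box[OF smooth_P]) auto
  ultimately show ?thesis by simp
qed

lemma has_real_derivative_potential_u:
  assumes "x \<in> {a1..b1}" "u \<in> {a2<..<b2}" "p \<in> {a3..b3}"
  shows "((\<lambda>s. potential x s p) has_real_derivative Q x u p) (at u)"
proof -
  have "((\<lambda>s. integral {a2..s} (\<lambda>s. Q x s a3)) has_real_derivative Q x u a3) (at u)"
    using assms box_nonempty(2)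
    by (intro has_real_derivative_integral_upper[where b=b2]
        continuous_on_box_compose[OF smooth_Q, of _ "\<lambda>s. x" "\<lambda>s. s" "\<lambda>s. a3"])
      (auto intro!: continuous_intros)
  from DERIV_add[OF DERIV_add[OF DERIV_const this] has_real_derivative_integral_R_u[OF assms]]
  show ?thesis unfolding potential_def by simp
qed

lemma has_real_derivative_potential_x:
  assumes "x \<in> {a1<..<b1}" "u \<in> {a2..b2}" "p \<in> {a3..b3}"
  shows "((\<lambda>r. potential r u p) has_real_derivative P x u p) (at x)"
proof -
  have "((\<lambda>r. integral {a1..r} (\<lambda>r. P r a2 a3)) has_real_derivative P x a2 a3) (at x)"
    using assms box_nonempty
    by (intro has_real_derivative_integral_upper[where b=b1]
        continuous_on_box_compose[OF smooth_P, of _ "\<lambda>r. r" "\<lambda>r. a2" "\<lambda>r. a3"])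
      (auto intro!: continuous_intros)
  from DERIV_add[OF DERIV_add[OF this has_real_derivative_integral_Q_x[OF assms(1,2)]]
      has_real_derivative_integral_R_x[OF assms]]
  show ?thesis unfolding potential_def by simp
qed

lemma potential_on_open_box: "potential_on ({a1<..<b1} \<times> {a2<..<b2} \<times> {a3<..<b3}) potential P Q R"
proof -
  let ?V = "{a1<..<b1} \<times> {a2<..<b2} \<times> {a3<..<b3}"
  have V: "open ?V" "?V \<subseteq> U"
    using box_subset by (auto intro!: open_Times)
  have partials: "pdx potential x u p = P x u p \<and> pdu potential x u p = Q x u p \<and> pdp potential x u p = R x u p"
    if "(x,u,p) \<in> ?V" for x u p
    using that by (auto intro!: pdx_eqI pdu_eqI pdp_eqI has_real_derivative_potential_x
        has_real_derivative_potential_u has_real_derivative_potential_p)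
  have "jdifferentiable potential x u p" if "(x,u,p) \<in> ?V" for x u p
    using that continuous_on_subset[OF continuous_on_smooth_on V(2)] smooth_Q smooth_R
    by (intro jdifferentiable_of_continuous_partials[where X="{a1<..<b1}" and Y="{a2<..<b2}" and Z="{a3<..<b3}"
          and Fx="P x u p" and Fu=Q and Fp=R] has_real_derivative_potential_x has_real_derivative_potential_u
          has_real_derivative_potential_p) auto
  moreover have "smooth_on ?V (pdx potential)" "smooth_on ?V (pdu potential)" "smooth_on ?V (pdp potential)"
    using partials
    by (auto intro: smooth_on_cong_open[OF V(1) _ smooth_on_subset[OF V(2)]] smooth_P smooth_Q smooth_R)
  ultimately show ?thesis
    unfolding potential_on_def using partials by (auto intro: smooth_onI)
qed

end

lemma closed_box_neighbourhood:
  fixes U :: "(real \<times> real \<times> real) set"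
  assumes "open U" "(x,u,p) \<in> U"
  obtains a1 b1 a2 b2 a3 b3 where "a1 < x" "x < b1" "a2 < u" "u < b2" "a3 < p" "p < b3"
    and "{a1..b1} \<times> {a2..b2} \<times> {a3..b3} \<subseteq> U"
proof -
  have interval: "\<exists>e>0. {c-e..c+e} \<subseteq> A" if A: "open A" "c \<in> A" for A and c :: real
  proof -
    obtain e where "e > 0" "cball c e \<subseteq> A" using A open_contains_cball by blast
    then show ?thesis by (auto simp: cball_eq_atLeastAtMost)
  qed
  obtain A B where AB: "open A" "open B" "(x,(u,p)) \<in> A \<times> B" "A \<times> B \<subseteq> U"
    by (rule open_prod_elim[OF assms])
  obtain B1 B2 where B12: "open B1" "open B2" "(u,p) \<in> B1 \<times> B2" "B1 \<times> B2 \<subseteq> B"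
    by (rule open_prod_elim[OF AB(2)]) (use AB(3) in blast)
  obtain e1 where e1: "e1 > 0" "{x-e1..x+e1} \<subseteq> A" using interval[OF AB(1), of x] AB(3) by auto
  obtain e2 where e2: "e2 > 0" "{u-e2..u+e2} \<subseteq> B1" using interval[OF B12(1), of u] B12(3) by auto
  obtain e3 where e3: "e3 > 0" "{p-e3..p+e3} \<subseteq> B2" using interval[OF B12(2), of p] B12(3) by auto
  have "{x-e1..x+e1} \<times> {u-e2..u+e2} \<times> {p-e3..p+e3} \<subseteq> A \<times> B1 \<times> B2"
    using e1(2) e2(2) e3(2) by (intro Sigma_mono) auto
  also have "\<dots> \<subseteq> U"
    using AB(4) B12(4) by auto
  finally show ?thesis
    using e1(1) e2(1) e3(1) by (intro that[of "x-e1" "x+e1" "u-e2" "u+e2" "p-e3" "p+e3"]) auto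
qed

theorem poincare_lemma:
  assumes "open U" "smooth_on U P" "smooth_on U Q" "smooth_on U R" "closed_form_on U P Q R" "z \<in> U"
  shows "\<exists>V. open V \<and> z \<in> V \<and> V \<subseteq> U \<and> (\<exists>I. potential_on V I P Q R)"
proof -
  obtain x u p where z: "z = (x,u,p)" by (cases z)
  obtain a1 b1 a2 b2 a3 b3 where box: "a1 < x" "x < b1" "a2 < u" "u < b2" "a3 < p" "p < b3"
    and subset: "{a1..b1} \<times> {a2..b2} \<times> {a3..b3} \<subseteq> U"
    using closed_box_neighbourhood assms(1,6) z by blast
  interpret closed_form_box U P Q R a1 b1 a2 b2 a3 b3
    using assms subset box by unfold_locales auto
  show ?thesis
    using potential_on_open_box subset box z
    by (intro exI[of _ "{a1<..<b1} \<times> {a2<..<b2} \<times> {a3<..<b3}"]) (auto intro!: open_Times)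
qed

section \<open>Canonical generalized symmetries and integrating factors\<close>

abbreviation Xvf :: "jfun \<Rightarrow> jvf" where
  "Xvf lam \<equiv> ((\<lambda>x u p. 0), (\<lambda>x u p. 1), lam)"

lemma vf_apply_mult:
  "jdifferentiable F x u p \<Longrightarrow> jdifferentiable G x u p \<Longrightarrow>
   vf_apply V (\<lambda>x u p. F x u p * G x u p) x u p = vf_apply V F x u p * G x u p + F x u p * vf_apply V G x u p"
  by (cases V) (simp add: vf_apply_def algebra_simps)

lemma vf_apply_diff:
  "jdifferentiable F x u p \<Longrightarrow> jdifferentiable G x u p \<Longrightarrow>
   vf_apply V (\<lambda>x u p. F x u p - G x u p) x u p = vf_apply V F x u p - vf_apply V G x u p"
  by (cases V) (simp add: vf_apply_def algebra_simps)

lemma vf_apply_inverse: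
  "jdifferentiable H x u p \<Longrightarrow> H x u p \<noteq> 0 \<Longrightarrow>
   vf_apply V (\<lambda>x u p. 1 / H x u p) x u p = - vf_apply V H x u p / (H x u p)\<^sup>2"
  by (cases V) (simp add: vf_apply_def field_simps power2_eq_square)

lemma vf_apply_scaled_Xvf:
  "vf_apply ((\<lambda>x u p. 0), (\<lambda>x u p. f x u p), (\<lambda>x u p. f x u p * lam x u p)) G x u p
     = f x u p * vf_apply (Xvf lam) G x u p"
  by (simp add: vf_apply_def algebra_simps)

lemma riccati_of_symmetry:
  assumes "gen_Cinf_symmetry U phi (\<lambda>x u p. 0) (\<lambda>x u p. 1) lam" "(x,u,p) \<in> U"
  shows "vf_apply (Avf phi) lam x u p = pdu phi x u p + lam x u p * pdp phi x u p - (lam x u p)\<^sup>2"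
  using assms
  by (auto simp: gen_Cinf_symmetry_def vf_eq_on_def lie_bracket_def lam_prol_def Aplus_def Avf_def
      vf_apply_def Let_def power2_eq_square)

lemma vf_apply_Avf_product_factor:
  assumes "jdifferentiable f x u p" "jdifferentiable g x u p" "f x u p \<noteq> 0"
    and "vf_apply (Avf phi) g x u p = (lam x u p - vf_apply (Avf phi) f x u p / f x u p) * g x u p"
  shows "vf_apply (Avf phi) (\<lambda>x u p. f x u p * g x u p) x u p = lam x u p * (f x u p * g x u p)"
  using assms by (simp add: vf_apply_mult field_simps)

lemma vf_apply_Avf_riccati_difference:
  assumes "jdifferentiable lam x u p" "jdifferentiable lam' x u p"
    and "vf_apply (Avf phi) lam x u p = pdu phi x u p + lam x u p * pdp phi x u p - (lam x u p)\<^sup>2"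
    and "vf_apply (Avf phi) lam' x u p = pdu phi x u p + lam' x u p * pdp phi x u p - (lam' x u p)\<^sup>2"
  shows "vf_apply (Avf phi) (\<lambda>x u p. lam' x u p - lam x u p) x u p
     = (lam' x u p - lam x u p) * (pdp phi x u p - lam x u p - lam' x u p)"
  using assms by (simp add: vf_apply_diff algebra_simps power2_eq_square)

lemma vf_apply_Xvf_difference:
  assumes "jdifferentiable lam x u p" "jdifferentiable lam' x u p" "lam x u p \<noteq> lam' x u p"
  shows "vf_apply (Xvf lam) (\<lambda>x u p. lam' x u p - lam x u p) x u p
     = (lam x u p - lam' x u p)
       * ((vf_apply (Xvf lam) lam' x u p - vf_apply (Xvf lam') lam x u p) / (lam x u p - lam' x u p)
          - pdp lam x u p)"
  using assms by (simp add: vf_apply_diff vf_apply_def field_simps)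

lemma integrating_factor_equations:
  fixes phi lam lam' f g :: jfun
  assumes mu: "mu = (\<lambda>x u p. 1 / (f x u p * g x u p * (lam' x u p - lam x u p)))"
    and jd: "jdifferentiable lam x u p" "jdifferentiable lam' x u p" "jdifferentiable f x u p"
      "jdifferentiable g x u p"
    and nz: "f x u p \<noteq> 0" "g x u p \<noteq> 0" "lam' x u p \<noteq> lam x u p"
    and riccati:
      "vf_apply (Avf phi) lam x u p = pdu phi x u p + lam x u p * pdp phi x u p - (lam x u p)\<^sup>2"
      "vf_apply (Avf phi) lam' x u p = pdu phi x u p + lam' x u p * pdp phi x u p - (lam' x u p)\<^sup>2"
    and f_X: "vf_apply (Xvf lam) f x u p / f x u p
      = (vf_apply (Xvf lam) lam' x u p - vf_apply (Xvf lam') lam x u p) / (lam x u p - lam' x u p)"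
    and g_X: "vf_apply (Xvf lam) g x u p = 0"
    and g_A: "vf_apply (Avf phi) g x u p = (lam' x u p - vf_apply (Avf phi) f x u p / f x u p) * g x u p"
  shows "vf_apply (Xvf lam) mu x u p = - pdp lam x u p * mu x u p"
    and "vf_apply (Avf phi) mu x u p = (lam x u p - pdp phi x u p) * mu x u p"
proof -
  define h where "h x u p = f x u p * g x u p * (lam' x u p - lam x u p)" for x u p
  have mu_h: "mu = (\<lambda>x u p. 1 / h x u p)" and h_nz: "h x u p \<noteq> 0"
    using nz by (simp_all add: mu h_def)
  have h_prod: "h = (\<lambda>x u p. (f x u p * g x u p) * (lam' x u p - lam x u p))"
    by (simp add: h_def fun_eq_iff)
  have jd_h: "jdifferentiable h x u p" "jdifferentiable (\<lambda>x u p. f x u p * g x u p) x u p"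
    "jdifferentiable (\<lambda>x u p. lam' x u p - lam x u p) x u p"
    using jd by (simp_all add: h_prod)
  have "vf_apply (Xvf lam) h x u p = pdp lam x u p * h x u p"
    unfolding h_prod using jd_h jd nz g_X
    by (simp add: vf_apply_mult vf_apply_Xvf_difference flip: f_X) (simp add: h_def field_simps)
  moreover have "vf_apply (Avf phi) h x u p = (pdp phi x u p - lam x u p) * h x u p"
    unfolding h_prod using jd_h
    by (simp add: vf_apply_mult vf_apply_Avf_product_factor[where lam=lam', OF jd(3,4) nz(1) g_A]
        vf_apply_Avf_riccati_difference[OF jd(1,2) riccati]) (simp add: h_def algebra_simps)
  ultimately show "vf_apply (Xvf lam) mu x u p = - pdp lam x u p * mu x u p"
    and "vf_apply (Avf phi) mu x u p = (lam x u p - pdp phi x u p) * mu x u p"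
    unfolding mu_h using h_nz
    by (simp_all add: vf_apply_inverse[OF jd_h(1) h_nz] field_simps power2_eq_square)
qed

lemma closed_form_of_integrating_factor_equations:
  assumes jd: "jdifferentiable phi x u p" "jdifferentiable lam x u p" "jdifferentiable mu x u p"
    and riccati:
      "vf_apply (Avf phi) lam x u p = pdu phi x u p + lam x u p * pdp phi x u p - (lam x u p)\<^sup>2"
    and mu_X: "vf_apply (Xvf lam) mu x u p = - pdp lam x u p * mu x u p"
    and mu_A: "vf_apply (Avf phi) mu x u p = (lam x u p - pdp phi x u p) * mu x u p"
  shows "pdu (\<lambda>x u p. mu x u p * (lam x u p * p - phi x u p)) x u p
           = pdx (\<lambda>x u p. - lam x u p * mu x u p) x u p"
    and "pdp (\<lambda>x u p. mu x u p * (lam x u p * p - phi x u p)) x u p = pdx mu x u p"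
    and "pdp (\<lambda>x u p. - lam x u p * mu x u p) x u p = pdu mu x u p"
proof -
  have mu_u: "pdu mu x u p = - pdp lam x u p * mu x u p - lam x u p * pdp mu x u p"
    using mu_X by (simp add: vf_apply_def algebra_simps)
  have mu_x: "pdx mu x u p = (lam x u p - pdp phi x u p) * mu x u p - p * pdu mu x u p - phi x u p * pdp mu x u p"
    using mu_A by (simp add: vf_apply_def Avf_def algebra_simps)
  have lam_x: "pdx lam x u p = pdu phi x u p + lam x u p * pdp phi x u p - (lam x u p)\<^sup>2
      - p * pdu lam x u p - phi x u p * pdp lam x u p"
    using riccati by (simp add: vf_apply_def Avf_def algebra_simps)
  show "pdu (\<lambda>x u p. mu x u p * (lam x u p * p - phi x u p)) x u p
           = pdx (\<lambda>x u p. - lam x u p * mu x u p) x u p"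
    using jd by (simp add: mu_x lam_x) (simp add: mu_u algebra_simps power2_eq_square)
  show "pdp (\<lambda>x u p. mu x u p * (lam x u p * p - phi x u p)) x u p = pdx mu x u p"
    using jd by (simp add: mu_x mu_u algebra_simps)
  show "pdp (\<lambda>x u p. - lam x u p * mu x u p) x u p = pdu mu x u p"
    using jd by (simp add: mu_u algebra_simps)
qed

lemma jacobi_last_multiplier_equation:
  fixes phi lam1 lam2 f1 g1 f2 g2 :: jfun
  assumes M: "M = (\<lambda>x u p. 1 / (f1 x u p * g1 x u p * f2 x u p * g2 x u p * (lam2 x u p - lam1 x u p)))"
    and jd: "jdifferentiable lam1 x u p" "jdifferentiable lam2 x u p" "jdifferentiable f1 x u p"
      "jdifferentiable g1 x u p" "jdifferentiable f2 x u p" "jdifferentiable g2 x u p"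
    and nz: "f1 x u p \<noteq> 0" "g1 x u p \<noteq> 0" "f2 x u p \<noteq> 0" "g2 x u p \<noteq> 0" "lam2 x u p \<noteq> lam1 x u p"
    and riccati:
      "vf_apply (Avf phi) lam1 x u p = pdu phi x u p + lam1 x u p * pdp phi x u p - (lam1 x u p)\<^sup>2"
      "vf_apply (Avf phi) lam2 x u p = pdu phi x u p + lam2 x u p * pdp phi x u p - (lam2 x u p)\<^sup>2"
    and g1_A: "vf_apply (Avf phi) g1 x u p = (lam1 x u p - vf_apply (Avf phi) f1 x u p / f1 x u p) * g1 x u p"
    and g2_A: "vf_apply (Avf phi) g2 x u p = (lam2 x u p - vf_apply (Avf phi) f2 x u p / f2 x u p) * g2 x u p"
  shows "vf_apply (Avf phi) M x u p + M x u p * pdp phi x u p = 0"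
proof -
  define h where "h = (\<lambda>x u p. (f1 x u p * g1 x u p) * (f2 x u p * g2 x u p) * (lam2 x u p - lam1 x u p))"
  have M_h: "M = (\<lambda>x u p. 1 / h x u p)" and h_nz: "h x u p \<noteq> 0"
    using nz by (simp_all add: M h_def fun_eq_iff ac_simps)
  have jd_h: "jdifferentiable h x u p" using jd by (simp add: h_def)
  have "vf_apply (Avf phi) h x u p = pdp phi x u p * h x u p"
    unfolding h_def using jd
    by (simp add: vf_apply_mult vf_apply_Avf_product_factor[where lam=lam1, OF jd(3,4) nz(1) g1_A]
        vf_apply_Avf_product_factor[where lam=lam2, OF jd(5,6) nz(3) g2_A] vf_apply_Avf_riccati_difference[OF jd(1,2) riccati])
      (simp add: algebra_simps)
  then show ?thesis
    unfolding M_h using h_nz by (simp add: vf_apply_inverse[OF jd_h h_nz] field_simps power2_eq_square)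
qed

lemma first_integral_of_potential:
  assumes "potential_on V I (\<lambda>x u p. mu x u p * (lam x u p * p - phi x u p))
      (\<lambda>x u p. - lam x u p * mu x u p) mu"
  shows "first_integral_assoc V phi (\<lambda>x u p. 0) (\<lambda>x u p. 1) lam I"
  using assms
  by (auto simp: potential_on_def first_integral_assoc_def vf_apply_def Avf_def lam_prol_def Aplus_def
      algebra_simps)

lemma integrating_factor_of_potential:
  assumes "potential_on V I (\<lambda>x u p. mu x u p * (lam x u p * p - phi x u p))
      (\<lambda>x u p. - lam x u p * mu x u p) mu"
  shows "integrating_factor_on V phi mu"
  using assms unfolding potential_on_def integrating_factor_on_def
  by (auto intro!: exI[of _ I] simp: algebra_simps)

lemma local_potential_of_integrating_factor:
  fixes phi lam lam' f g mu :: jfun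
  assumes U: "open U" "z \<in> U"
    and sym: "gen_Cinf_symmetry U phi (\<lambda>x u p. 0) (\<lambda>x u p. 1) lam"
      "gen_Cinf_symmetry U phi (\<lambda>x u p. 0) (\<lambda>x u p. 1) lam'"
    and smooth: "smooth_on U phi" "smooth_on U f" "smooth_on U g"
    and mu: "mu = (\<lambda>x u p. 1 / (f x u p * g x u p * (lam' x u p - lam x u p)))"
    and nz: "\<And>x u p. (x,u,p) \<in> U \<Longrightarrow> f x u p \<noteq> 0 \<and> g x u p \<noteq> 0 \<and> lam' x u p \<noteq> lam x u p"
    and f_X: "\<And>x u p. (x,u,p) \<in> U \<Longrightarrow> vf_apply (Xvf lam) f x u p / f x u p
      = (vf_apply (Xvf lam) lam' x u p - vf_apply (Xvf lam') lam x u p) / (lam x u p - lam' x u p)"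
    and g_X: "\<And>x u p. (x,u,p) \<in> U \<Longrightarrow> vf_apply (Xvf lam) g x u p = 0"
    and g_A: "\<And>x u p. (x,u,p) \<in> U \<Longrightarrow>
      vf_apply (Avf phi) g x u p = (lam' x u p - vf_apply (Avf phi) f x u p / f x u p) * g x u p"
  shows "\<exists>V. open V \<and> z \<in> V \<and> V \<subseteq> U \<and> (\<exists>I. potential_on V I
      (\<lambda>x u p. mu x u p * (lam x u p * p - phi x u p)) (\<lambda>x u p. - lam x u p * mu x u p) mu)"
proof (rule poincare_lemma[OF U(1) _ _ _ _ U(2)])
  have smooth_lam: "smooth_on U lam" "smooth_on U lam'"
    using sym by (simp_all add: gen_Cinf_symmetry_def)
  show smooth_mu: "smooth_on U mu"
    unfolding mu using nz
    by (intro smooth_on_divide smooth_on_mult smooth_on_diff smooth_on_const smooth_lam smooth U(1)) auto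
  show "smooth_on U (\<lambda>x u p. mu x u p * (lam x u p * p - phi x u p))"
    by (intro smooth_on_mult smooth_on_diff smooth_on_coordinate_p smooth_mu smooth_lam smooth U(1))
  show "smooth_on U (\<lambda>x u p. - lam x u p * mu x u p)"
    by (intro smooth_on_mult smooth_on_minus smooth_mu smooth_lam U(1))
  show "closed_form_on U (\<lambda>x u p. mu x u p * (lam x u p * p - phi x u p)) (\<lambda>x u p. - lam x u p * mu x u p) mu"
    unfolding closed_form_on_def
  proof (clarify)
    fix x u p
    assume xup: "(x,u,p) \<in> U"
    note jd = smooth_on_jdifferentiable[OF _ xup]
    note riccati = riccati_of_symmetry[OF sym(1) xup] riccati_of_symmetry[OF sym(2) xup]
    note factor = integrating_factor_equations[OF mu jd[OF smooth_lam(1)] jd[OF smooth_lam(2)]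
        jd[OF smooth(2)] jd[OF smooth(3)] _ _ _ riccati f_X[OF xup] g_X[OF xup] g_A[OF xup]]
    show "pdu (\<lambda>x u p. mu x u p * (lam x u p * p - phi x u p)) x u p
          = pdx (\<lambda>x u p. - lam x u p * mu x u p) x u p \<and>
        pdp (\<lambda>x u p. mu x u p * (lam x u p * p - phi x u p)) x u p = pdx mu x u p \<and>
        pdp (\<lambda>x u p. - lam x u p * mu x u p) x u p = pdu mu x u p"
      using closed_form_of_integrating_factor_equations[OF jd[OF smooth(1)] jd[OF smooth_lam(1)]
          jd[OF smooth_mu] riccati(1) factor] nz[OF xup] by auto
  qed
qed

locale canonical_symmetry_pair =
  fixes U :: "(real \<times> real \<times> real) set"
    and phi lam1 lam2 f1 f2 g1 g2 rho rho1 rho2 mu1 mu2 M :: jfun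
  assumes U_open: "open U"
    and phi_smooth: "smooth_on U phi"
    and sym1: "gen_Cinf_symmetry U phi (\<lambda>x u p. 0) (\<lambda>x u p. 1) lam1"
    and sym2: "gen_Cinf_symmetry U phi (\<lambda>x u p. 0) (\<lambda>x u p. 1) lam2"
    and nz: "\<forall>(x,u,p)\<in>U. lam1 x u p - lam2 x u p \<noteq> 0 \<and> f1 x u p \<noteq> 0 \<and> f2 x u p \<noteq> 0
                         \<and> g1 x u p \<noteq> 0 \<and> g2 x u p \<noteq> 0"
    and rho_def: "rho = (\<lambda>x u p.
        (vf_apply (Xvf lam1) lam2 x u p - vf_apply (Xvf lam2) lam1 x u p) / (lam1 x u p - lam2 x u p))"
    and f_smooth: "smooth_on U f1" "smooth_on U f2"
    and f_eqs: "\<forall>(x,u,p)\<in>U.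
        vf_apply (Xvf lam1) f2 x u p / f2 x u p = rho x u p \<and>
        vf_apply (Xvf lam2) f1 x u p / f1 x u p = rho x u p"
    and rho1_def: "rho1 = (\<lambda>x u p. lam1 x u p - vf_apply (Avf phi) f1 x u p / f1 x u p)"
    and rho2_def: "rho2 = (\<lambda>x u p. lam2 x u p - vf_apply (Avf phi) f2 x u p / f2 x u p)"
    and g_smooth: "smooth_on U g1" "smooth_on U g2"
    and g_eqs: "\<forall>(x,u,p)\<in>U.
        vf_apply (Avf phi) g1 x u p = rho1 x u p * g1 x u p \<and>
        vf_apply ((\<lambda>x u p. 0), (\<lambda>x u p. f2 x u p), (\<lambda>x u p. f2 x u p * lam2 x u p)) g1 x u p = 0 \<and>
        vf_apply (Avf phi) g2 x u p = rho2 x u p * g2 x u p \<and>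
        vf_apply ((\<lambda>x u p. 0), (\<lambda>x u p. f1 x u p), (\<lambda>x u p. f1 x u p * lam1 x u p)) g2 x u p = 0"
    and mu1_def: "mu1 = (\<lambda>x u p. 1 / (f2 x u p * g2 x u p * (lam2 x u p - lam1 x u p)))"
    and mu2_def: "mu2 = (\<lambda>x u p. 1 / (f1 x u p * g1 x u p * (lam1 x u p - lam2 x u p)))"
    and M_def: "M = (\<lambda>x u p. 1 / (f1 x u p * g1 x u p * f2 x u p * g2 x u p * (lam2 x u p - lam1 x u p)))"
begin

lemma nonzero:
  assumes "(x,u,p) \<in> U"
  shows "lam1 x u p \<noteq> lam2 x u p" "f1 x u p \<noteq> 0" "f2 x u p \<noteq> 0" "g1 x u p \<noteq> 0" "g2 x u p \<noteq> 0"
  using nz assms by auto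

lemma f_Xvf:
  assumes "(x,u,p) \<in> U"
  shows "vf_apply (Xvf lam1) f2 x u p / f2 x u p
      = (vf_apply (Xvf lam1) lam2 x u p - vf_apply (Xvf lam2) lam1 x u p) / (lam1 x u p - lam2 x u p)"
    and "vf_apply (Xvf lam2) f1 x u p / f1 x u p
      = (vf_apply (Xvf lam2) lam1 x u p - vf_apply (Xvf lam1) lam2 x u p) / (lam2 x u p - lam1 x u p)"
proof -
  have "rho x u p
      = (vf_apply (Xvf lam2) lam1 x u p - vf_apply (Xvf lam1) lam2 x u p) / (lam2 x u p - lam1 x u p)"
    using minus_divide_divide[of "vf_apply (Xvf lam1) lam2 x u p - vf_apply (Xvf lam2) lam1 x u p"
        "lam1 x u p - lam2 x u p"]
    by (simp add: rho_def)
  then show "vf_apply (Xvf lam1) f2 x u p / f2 x u p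
      = (vf_apply (Xvf lam1) lam2 x u p - vf_apply (Xvf lam2) lam1 x u p) / (lam1 x u p - lam2 x u p)"
    and "vf_apply (Xvf lam2) f1 x u p / f1 x u p
      = (vf_apply (Xvf lam2) lam1 x u p - vf_apply (Xvf lam1) lam2 x u p) / (lam2 x u p - lam1 x u p)"
    using f_eqs assms by (auto simp: rho_def)
qed

lemma g_Xvf_Avf:
  assumes "(x,u,p) \<in> U"
  shows "vf_apply (Xvf lam2) g1 x u p = 0"
    and "vf_apply (Avf phi) g1 x u p = (lam1 x u p - vf_apply (Avf phi) f1 x u p / f1 x u p) * g1 x u p"
    and "vf_apply (Xvf lam1) g2 x u p = 0"
    and "vf_apply (Avf phi) g2 x u p = (lam2 x u p - vf_apply (Avf phi) f2 x u p / f2 x u p) * g2 x u p"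
  using g_eqs[rule_format, OF assms] nonzero[OF assms] unfolding rho1_def rho2_def vf_apply_scaled_Xvf
  by auto

lemma local_potentials:
  assumes "z \<in> U"
  shows "\<exists>V. open V \<and> z \<in> V \<and> V \<subseteq> U \<and>
    (\<exists>I1. potential_on V I1 (\<lambda>x u p. mu1 x u p * (lam1 x u p * p - phi x u p))
       (\<lambda>x u p. - lam1 x u p * mu1 x u p) mu1) \<and>
    (\<exists>I2. potential_on V I2 (\<lambda>x u p. mu2 x u p * (lam2 x u p * p - phi x u p))
       (\<lambda>x u p. - lam2 x u p * mu2 x u p) mu2)"
proof -
  obtain V1 I1 where V1: "open V1" "z \<in> V1" "V1 \<subseteq> U" and I1: "potential_on V1 I1
      (\<lambda>x u p. mu1 x u p * (lam1 x u p * p - phi x u p)) (\<lambda>x u p. - lam1 x u p * mu1 x u p) mu1"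
    using local_potential_of_integrating_factor[OF U_open assms sym1 sym2 phi_smooth f_smooth(2)
        g_smooth(2) mu1_def _ f_Xvf(1) g_Xvf_Avf(3,4)] nonzero by fastforce
  obtain V2 I2 where V2: "open V2" "z \<in> V2" "V2 \<subseteq> U" and I2: "potential_on V2 I2
      (\<lambda>x u p. mu2 x u p * (lam2 x u p * p - phi x u p)) (\<lambda>x u p. - lam2 x u p * mu2 x u p) mu2"
    using local_potential_of_integrating_factor[OF U_open assms sym2 sym1 phi_smooth f_smooth(1)
        g_smooth(1) mu2_def _ f_Xvf(2) g_Xvf_Avf(1,2)] nonzero by fastforce
  show ?thesis
    using V1 V2 potential_on_subset[OF I1, of "V1 \<inter> V2"] potential_on_subset[OF I2, of "V1 \<inter> V2"]
    by (intro exI[of _ "V1 \<inter> V2"]) auto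
qed

lemma integrating_factors_and_first_integrals:
  assumes "z \<in> U"
  shows "\<exists>V. open V \<and> z \<in> V \<and> V \<subseteq> U \<and>
    integrating_factor_on V phi mu1 \<and> integrating_factor_on V phi mu2 \<and>
    (\<exists>I1. potential_on V I1 (\<lambda>x u p. mu1 x u p * (lam1 x u p * p - phi x u p))
       (\<lambda>x u p. - lam1 x u p * mu1 x u p) mu1) \<and>
    (\<forall>I1. potential_on V I1 (\<lambda>x u p. mu1 x u p * (lam1 x u p * p - phi x u p))
       (\<lambda>x u p. - lam1 x u p * mu1 x u p) mu1
      \<longrightarrow> first_integral_assoc V phi (\<lambda>x u p. 0) (\<lambda>x u p. 1) lam1 I1) \<and>
    (\<exists>I2. potential_on V I2 (\<lambda>x u p. mu2 x u p * (lam2 x u p * p - phi x u p))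
       (\<lambda>x u p. - lam2 x u p * mu2 x u p) mu2) \<and>
    (\<forall>I2. potential_on V I2 (\<lambda>x u p. mu2 x u p * (lam2 x u p * p - phi x u p))
       (\<lambda>x u p. - lam2 x u p * mu2 x u p) mu2
      \<longrightarrow> first_integral_assoc V phi (\<lambda>x u p. 0) (\<lambda>x u p. 1) lam2 I2)"
proof -
  obtain V I1 I2 where V: "open V" "z \<in> V" "V \<subseteq> U"
    and I1: "potential_on V I1 (\<lambda>x u p. mu1 x u p * (lam1 x u p * p - phi x u p))
      (\<lambda>x u p. - lam1 x u p * mu1 x u p) mu1"
    and I2: "potential_on V I2 (\<lambda>x u p. mu2 x u p * (lam2 x u p * p - phi x u p))
      (\<lambda>x u p. - lam2 x u p * mu2 x u p) mu2"
    using local_potentials[OF assms] by blast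
  show ?thesis
  proof (intro exI[of _ V] conjI allI impI V)
    show "integrating_factor_on V phi mu1" "integrating_factor_on V phi mu2"
      by (rule integrating_factor_of_potential[OF I1], rule integrating_factor_of_potential[OF I2])
  qed (use I1 I2 first_integral_of_potential in blast)+
qed

lemma jacobi_last_multiplier: "jacobi_last_multiplier U phi M"
  unfolding jacobi_last_multiplier_def
proof (clarify)
  fix x u p
  assume xup: "(x,u,p) \<in> U"
  note jd = smooth_on_jdifferentiable[OF _ xup]
  have smooth_lam: "smooth_on U lam1" "smooth_on U lam2"
    using sym1 sym2 by (simp_all add: gen_Cinf_symmetry_def)
  show "vf_apply (Avf phi) M x u p + M x u p * pdp phi x u p = 0"
    using nonzero[OF xup]
    by (intro jacobi_last_multiplier_equation[OF M_def jd[OF smooth_lam(1)] jd[OF smooth_lam(2)]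
          jd[OF f_smooth(1)] jd[OF g_smooth(1)] jd[OF f_smooth(2)] jd[OF g_smooth(2)]
          _ _ _ _ _ riccati_of_symmetry[OF sym1 xup] riccati_of_symmetry[OF sym2 xup]
          g_Xvf_Avf(2,4)[OF xup]]) auto
qed

end

theorem theorem4:
  fixes U :: "(real \<times> real \<times> real) set"
    and phi lam1 lam2 f1 f2 g1 g2 rho rho1 rho2 mu1 mu2 M :: jfun
  assumes U_open: "open U"
    and phi_smooth: "smooth_on U phi"
    and sym1: "gen_Cinf_symmetry U phi (\<lambda>x u p. 0) (\<lambda>x u p. 1) lam1"
    and sym2: "gen_Cinf_symmetry U phi (\<lambda>x u p. 0) (\<lambda>x u p. 1) lam2"
    and noneq: "\<not> A_equivalent U phi (\<lambda>x u p. 0) (\<lambda>x u p. 1) lam1 (\<lambda>x u p. 0) (\<lambda>x u p. 1) lam2"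
    and nz: "\<forall>(x,u,p)\<in>U. lam1 x u p - lam2 x u p \<noteq> 0 \<and> f1 x u p \<noteq> 0 \<and> f2 x u p \<noteq> 0
                         \<and> g1 x u p \<noteq> 0 \<and> g2 x u p \<noteq> 0"
    and rho_def: "rho \<equiv> (\<lambda>x u p.
        (vf_apply ((\<lambda>x u p. 0), (\<lambda>x u p. 1), lam1) lam2 x u p
         - vf_apply ((\<lambda>x u p. 0), (\<lambda>x u p. 1), lam2) lam1 x u p)
        / (lam1 x u p - lam2 x u p))"
    and f_smooth: "smooth_on U f1" "smooth_on U f2"
    and f_eqs: "\<forall>(x,u,p)\<in>U.
        vf_apply ((\<lambda>x u p. 0), (\<lambda>x u p. 1), lam1) f2 x u p / f2 x u p = rho x u p \<and>
        vf_apply ((\<lambda>x u p. 0), (\<lambda>x u p. 1), lam2) f1 x u p / f1 x u p = rho x u p"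
    and rho1_def: "rho1 \<equiv> (\<lambda>x u p. lam1 x u p - vf_apply (Avf phi) f1 x u p / f1 x u p)"
    and rho2_def: "rho2 \<equiv> (\<lambda>x u p. lam2 x u p - vf_apply (Avf phi) f2 x u p / f2 x u p)"
    and g_smooth: "smooth_on U g1" "smooth_on U g2"
    and g_eqs: "\<forall>(x,u,p)\<in>U.
        vf_apply (Avf phi) g1 x u p = rho1 x u p * g1 x u p \<and>
        vf_apply ((\<lambda>x u p. 0), (\<lambda>x u p. f2 x u p), (\<lambda>x u p. f2 x u p * lam2 x u p)) g1 x u p = 0 \<and>
        vf_apply (Avf phi) g2 x u p = rho2 x u p * g2 x u p \<and>
        vf_apply ((\<lambda>x u p. 0), (\<lambda>x u p. f1 x u p), (\<lambda>x u p. f1 x u p * lam1 x u p)) g2 x u p = 0"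
    and mu1_def: "mu1 \<equiv> (\<lambda>x u p. 1 / (f2 x u p * g2 x u p * (lam2 x u p - lam1 x u p)))"
    and mu2_def: "mu2 \<equiv> (\<lambda>x u p. 1 / (f1 x u p * g1 x u p * (lam1 x u p - lam2 x u p)))"
    and M_def: "M \<equiv> (\<lambda>x u p. 1 / (f1 x u p * g1 x u p * f2 x u p * g2 x u p
                                  * (lam2 x u p - lam1 x u p)))"
  shows "(\<forall>z0\<in>U. \<exists>V. open V \<and> z0 \<in> V \<and> V \<subseteq> U \<and>
            integrating_factor_on V phi mu1 \<and> integrating_factor_on V phi mu2 \<and>
            (\<exists>I1. smooth_on V I1 \<and> (\<forall>(x,u,p)\<in>V.
                pdx I1 x u p = mu1 x u p * (lam1 x u p * p - phi x u p) \<and>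
                pdu I1 x u p = - lam1 x u p * mu1 x u p \<and> pdp I1 x u p = mu1 x u p)) \<and>
            (\<forall>I1. smooth_on V I1 \<and> (\<forall>(x,u,p)\<in>V.
                pdx I1 x u p = mu1 x u p * (lam1 x u p * p - phi x u p) \<and>
                pdu I1 x u p = - lam1 x u p * mu1 x u p \<and> pdp I1 x u p = mu1 x u p)
              \<longrightarrow> first_integral_assoc V phi (\<lambda>x u p. 0) (\<lambda>x u p. 1) lam1 I1) \<and>
            (\<exists>I2. smooth_on V I2 \<and> (\<forall>(x,u,p)\<in>V.
                pdx I2 x u p = mu2 x u p * (lam2 x u p * p - phi x u p) \<and>
                pdu I2 x u p = - lam2 x u p * mu2 x u p \<and> pdp I2 x u p = mu2 x u p)) \<and>
            (\<forall>I2. smooth_on V I2 \<and> (\<forall>(x,u,p)\<in>V.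
                pdx I2 x u p = mu2 x u p * (lam2 x u p * p - phi x u p) \<and>
                pdu I2 x u p = - lam2 x u p * mu2 x u p \<and> pdp I2 x u p = mu2 x u p)
              \<longrightarrow> first_integral_assoc V phi (\<lambda>x u p. 0) (\<lambda>x u p. 1) lam2 I2))
         \<and> jacobi_last_multiplier U phi M"
proof -
  interpret canonical_symmetry_pair U phi lam1 lam2 f1 f2 g1 g2 rho rho1 rho2 mu1 mu2 M
    using assms by unfold_locales simp_all
  show ?thesis
    by (intro conjI ballI jacobi_last_multiplier)
      (rule integrating_factors_and_first_integrals[unfolded potential_on_def])
qed

end
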